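(* Let $V\ge 1$ be the vocabulary size and let $\phi_t(\mathbf{x})\in\mathbb{R}^V$ be the normalized tf-idf feature vector of a text document $\mathbf{x}$, so that all entries of $\phi_t(\mathbf{x})$ are nonnegative and $\|\phi_t(\mathbf{x})\|_2=1$. Let $\mathbf{w}_p,\mathbf{w}_n\in\mathbb{R}^V$ be label embeddings of two labels $p,n$ with $\|\mathbf{w}_p\|_2\le 1$, $\|\mathbf{w}_n\|_2\le 1$ and all entries nonnegative. For $l\in\{p,n\}$ let $\mathbb{K}_l\subseteq\{1,\dots,V\}$ be a set of selected keywords and let $\mathbf{v}_l\in\mathbb{R}^V$ be the keyword-selected label embedding, defined by $v_{li}=w_{li}$ if $i\in\mathbb{K}_l$ and $v_{li}=0$ otherwise. Let $\delta>0$ and assume that both $\mathbf{v}_p$ and $\mathbf{v}_n$ are $\delta$-bounded, i.e. $\langle\phi_t(\mathbf{x}),\mathbf{v}_l\rangle\ge\langle\phi_t(\mathbf{x}),\mathbf{w}_l\rangle-\delta$ for $l\in\{p,n\}$. For a feature vector $\phi$ and embeddings $\mathbf{a},\mathbf{b}$, define the error margin $\mu(\phi,\mathbf{a},\mathbf{b})=\langle\phi,\mathbf{a}-\mathbf{b}\rangle$. Then $$\bigl|\mu(\phi_t(\mathbf{x}),\mathbf{w}_p,\mathbf{w}_n)-\mu(\phi_t(\mathbf{x}),\mathbf{v}_p,\mathbf{v}_n)\bigr|\le\delta.$$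
   Context: Setting: label embeddings are vectors in $\mathbb{R}^V$ indexed by vocabulary words, with nonnegative entries and Euclidean norm at most 1; the text feature $\phi_t(\mathbf{x})$ is a nonnegative tf-idf vector of unit Euclidean norm. Keyword selection zeroes out all coordinates of a label embedding outside the chosen keyword set. *)

theory Defs
  imports "HOL-Analysis.Analysis"
begin

definition keyword_select :: "'n set \<Rightarrow> real ^ 'n \<Rightarrow> real ^ 'n" where
  "keyword_select K w = (\<chi> i. if i \<in> K then w $ i else 0)"

definition error_margin :: "real ^ 'n \<Rightarrow> real ^ 'n \<Rightarrow> real ^ 'n \<Rightarrow> real" where
  "error_margin phi a b = phi \<bullet> (a - b)"

end

theory Submission
  imports Defs
begin

text \<open>Since \<open>phi\<close> and the embeddings are nonnegative, keyword selection can only lower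
  the inner product with \<open>phi\<close>; with \<open>\<delta>\<close>-boundedness, each loss
  \<open>phi \<bullet> w - phi \<bullet> keyword_select K w\<close> therefore lies in \<open>[0, \<delta>]\<close>.
  The change of the error margin is the difference of the two losses, hence at most \<open>\<delta>\<close>
  in absolute value.\<close>

lemma inner_keyword_select_le:
  fixes phi w :: "real ^ 'n"
  assumes "\<And>i. phi $ i \<ge> 0" and "\<And>i. w $ i \<ge> 0"
  shows "phi \<bullet> keyword_select K w \<le> phi \<bullet> w"
  unfolding inner_vec_def keyword_select_def
  by (rule sum_mono) (use assms in auto)

lemma error_margin_diff:
  "error_margin phi a b - error_margin phi a' b' = (phi \<bullet> a - phi \<bullet> a') - (phi \<bullet> b - phi \<bullet> b')"
  unfolding error_margin_def inner_diff_right by simp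

theorem lemma1:
  fixes phi wp wn :: "real ^ 'n" and Kp Kn :: "'n set" and \<delta> :: real
  assumes phi_nonneg: "\<forall>i. phi $ i \<ge> 0"
    and phi_norm: "norm phi = 1"
    and wp_nonneg: "\<forall>i. wp $ i \<ge> 0" and wp_norm: "norm wp \<le> 1"
    and wn_nonneg: "\<forall>i. wn $ i \<ge> 0" and wn_norm: "norm wn \<le> 1"
    and delta_pos: "\<delta> > 0"
    and bound_p: "phi \<bullet> keyword_select Kp wp \<ge> phi \<bullet> wp - \<delta>"
    and bound_n: "phi \<bullet> keyword_select Kn wn \<ge> phi \<bullet> wn - \<delta>"
  shows "\<bar>error_margin phi wp wn - error_margin phi (keyword_select Kp wp) (keyword_select Kn wn)\<bar> \<le> \<delta>"
proof -
  have "phi \<bullet> keyword_select Kp wp \<le> phi \<bullet> wp"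
    using phi_nonneg wp_nonneg by (simp add: inner_keyword_select_le)
  moreover have "phi \<bullet> keyword_select Kn wn \<le> phi \<bullet> wn"
    using phi_nonneg wn_nonneg by (simp add: inner_keyword_select_le)
  ultimately show ?thesis
    unfolding error_margin_diff using bound_p bound_n by linarith
qed

end
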